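(* Let $p,q,p',q'\in\mathbb{R}^3$ satisfy $p^\mu+q^\mu=p'^\mu+q'^\mu$. If $\bar g<1$, then $q'^0\approx q^0$ and $p'^0\approx p^0$ with absolute implicit constants. In particular, if $2^{-k-1}\le\bar g\le 2^{-k}$ for some integer $k>0$, then $p^0\le\sqrt5\,p'^0$ and $p'^0\le\sqrt5\,p^0$.
   Context: For $p\in\mathbb{R}^3$, $p^0=\sqrt{1+|p|^2}$, $p^\mu=(p^0,p)$, $p^\mu q_\mu=-p^0q^0+p\cdot q$, and $\bar g=g(p'^\mu,p^\mu)=\sqrt{2(-p'^\mu p_\mu-1)}$. *)

theory Defs
  imports "HOL-Analysis.Analysis"
begin

text \<open>Energy p^0 = sqrt(1 + |p|^2) of a momentum p in R^3.\<close>
definition energy :: "real^3 \<Rightarrow> real" where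
  "energy p = sqrt (1 + (norm p)\<^sup>2)"

text \<open>Minkowski product p'^mu p_mu = - p'^0 p^0 + p' . p (signature -+++).\<close>
definition mink :: "real^3 \<Rightarrow> real^3 \<Rightarrow> real" where
  "mink p' p = - energy p' * energy p + p' \<bullet> p"

definition gbar :: "real^3 \<Rightarrow> real^3 \<Rightarrow> real" where
  "gbar p' p = sqrt (2 * (- mink p' p - 1))"

definition conserv :: "real^3 \<Rightarrow> real^3 \<Rightarrow> real^3 \<Rightarrow> real^3 \<Rightarrow> bool" where
  "conserv p q p' q' \<longleftrightarrow>
     energy p + energy q = energy p' + energy q' \<and> p + q = p' + q'"

end

theory Submission
  imports Defs
begin

text \<open>Both \<open>gbar p' p\<close> and \<open>gbar q' q\<close> equal the Minkowski length of the momentum transfer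
  \<open>p - p' = q' - q\<close>, so it suffices to compare \<open>p'\<^sup>0\<close> with \<open>p\<^sup>0\<close>. The reverse Cauchy-Schwarz
  inequality for future timelike vectors gives \<open>(p\<^sup>0)\<^sup>2 + (p'\<^sup>0)\<^sup>2 \<le> (2 + gbar\<^sup>2) p\<^sup>0 p'\<^sup>0\<close>, so the
  ratio \<open>r = p'\<^sup>0 / p\<^sup>0\<close> satisfies \<open>r + 1/r \<le> 2 + gbar\<^sup>2\<close>; for \<open>gbar < 1\<close> this forces \<open>r \<le> 3\<close>,
  for \<open>gbar \<le> 1/2\<close> it forces \<open>r \<le> 2 < sqrt 5\<close>.\<close>

lemma energy_ge_one: "1 \<le> energy x"
  unfolding energy_def by simp

lemma energy_sq: "(energy x)\<^sup>2 = 1 + (norm x)\<^sup>2"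
  unfolding energy_def by simp

lemma neg_mink_ge_one: "1 \<le> - mink x y"
proof -
  define a b where "a = energy x" and "b = energy y"
  have "(norm x * norm y)\<^sup>2 = (a\<^sup>2 - 1) * (b\<^sup>2 - 1)"
    by (simp add: a_def b_def energy_sq power_mult_distrib)
  also have "\<dots> = (a * b - 1)\<^sup>2 - (a - b)\<^sup>2"
    by (simp add: power2_eq_square algebra_simps)
  finally have "(norm x * norm y)\<^sup>2 \<le> (a * b - 1)\<^sup>2"
    by simp
  moreover have "1 \<le> a * b"
    using mult_mono[of 1 a 1 b] energy_ge_one[of x] energy_ge_one[of y] by (simp add: a_def b_def)
  ultimately have "norm x * norm y \<le> a * b - 1"
    by (simp add: power2_le_iff_abs_le)
  moreover have "x \<bullet> y \<le> norm x * norm y"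
    by (rule norm_cauchy_schwarz)
  ultimately show ?thesis
    by (simp add: mink_def a_def b_def)
qed

lemma sum_sq_energy_le:
  "(energy x)\<^sup>2 + (energy y)\<^sup>2 \<le> 2 * (- mink x y) * (energy x * energy y)"
proof -
  define a b c where "a = energy x" and "b = energy y" and "c = - mink x y"
  have a: "1 \<le> a" and b: "1 \<le> b" and c: "1 \<le> c"
    using energy_ge_one neg_mink_ge_one by (auto simp: a_def b_def c_def)
  have "a\<^sup>2 + b\<^sup>2 \<le> 2 * c * (a * b)"
  proof (cases "a * b \<le> c")
    case True
    have "a\<^sup>2 \<le> (a * b)\<^sup>2" and "b\<^sup>2 \<le> (a * b)\<^sup>2"
      using a b mult_mono[of 1 a 1 b] by (simp_all add: power_mono)
    then have "a\<^sup>2 + b\<^sup>2 \<le> 2 * (a * b) * (a * b)"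
      by (simp add: power2_eq_square)
    also have "\<dots> \<le> 2 * c * (a * b)"
      using True a b by simp
    finally show ?thesis .
  next
    case False
    have "a * b - c \<le> norm x * norm y"
      using norm_cauchy_schwarz[of x y] by (simp add: a_def b_def c_def mink_def)
    then have "(a * b - c)\<^sup>2 \<le> (norm x * norm y)\<^sup>2"
      using False by (intro power_mono) auto
    also have "\<dots> = (a\<^sup>2 - 1) * (b\<^sup>2 - 1)"
      by (simp add: a_def b_def energy_sq power_mult_distrib)
    finally have "a\<^sup>2 + b\<^sup>2 \<le> 2 * c * (a * b) + 1 - c\<^sup>2"
      by (simp add: power2_eq_square algebra_simps)
    then show ?thesis
      using mult_mono[of 1 c 1 c] c by (simp add: power2_eq_square)
  qed
  then show ?thesis
    by (simp add: a_def b_def c_def)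
qed

lemma le_mult_if_sum_sq_le:
  fixes a b t :: real
  assumes "0 \<le> b" "1 \<le> t" "a\<^sup>2 + b\<^sup>2 \<le> (t + 1 / t) * (a * b)"
  shows "a \<le> t * b"
proof (rule ccontr)
  assume "\<not> a \<le> t * b"
  then have gt: "t * b < a"
    by simp
  have "1 \<le> t * t"
    using assms(2) mult_mono[of 1 t 1 t] by simp
  then have "b \<le> t * (t * b)"
    using mult_right_mono[of 1 "t * t" b] assms(1) by simp
  also have "\<dots> < t * a"
    using gt assms(2) by simp
  finally have "0 < (t * a - b) * (a - t * b)"
    using gt by simp
  also have "\<dots> = t * (a\<^sup>2 + b\<^sup>2) - t * (t + 1 / t) * (a * b)"
    using assms(2) by (simp add: power2_eq_square field_simps)
  finally show False
    using assms(2,3) mult_left_mono[OF assms(3), of t] by simp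
qed

lemma gbar_nonneg: "0 \<le> gbar x y"
  using neg_mink_ge_one[of x y] by (simp add: gbar_def)

lemma gbar_sq: "(gbar x y)\<^sup>2 = 2 * (- mink x y - 1)"
  using neg_mink_ge_one[of x y] by (simp add: gbar_def)

lemma gbar_eq_sqrt_diff:
  "gbar x y = sqrt ((norm (x - y))\<^sup>2 - (energy x - energy y)\<^sup>2)"
proof -
  have "(norm (x - y))\<^sup>2 = (norm x)\<^sup>2 - 2 * (x \<bullet> y) + (norm y)\<^sup>2"
    by (simp add: power2_norm_eq_inner inner_diff inner_commute)
  moreover have "(energy x - energy y)\<^sup>2 = 2 + (norm x)\<^sup>2 + (norm y)\<^sup>2 - 2 * (energy x * energy y)"
    by (simp add: power2_diff energy_sq)
  ultimately show ?thesis
    by (simp add: gbar_def mink_def algebra_simps)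
qed

lemma gbar_commute: "gbar x y = gbar y x"
  by (simp add: gbar_eq_sqrt_diff norm_minus_commute power2_commute)

lemma gbar_conserv:
  assumes "conserv p q p' q'"
  shows "gbar q' q = gbar p' p"
proof -
  have "q' - q = p - p'" and "energy q' - energy q = energy p - energy p'"
    using assms by (auto simp: conserv_def algebra_simps)
  then have "gbar q' q = gbar p p'"
    by (simp add: gbar_eq_sqrt_diff)
  then show ?thesis
    by (simp add: gbar_commute)
qed

lemma energy_le_mult_energy:
  assumes "1 \<le> t" "2 + (gbar x y)\<^sup>2 \<le> t + 1 / t"
  shows "energy x \<le> t * energy y"
proof (rule le_mult_if_sum_sq_le)
  have "0 \<le> energy x * energy y"
    using energy_ge_one[of x] energy_ge_one[of y] by simp
  then have "2 * (- mink x y) * (energy x * energy y) \<le> (t + 1 / t) * (energy x * energy y)"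
    using assms(2) by (intro mult_right_mono) (simp_all add: gbar_sq)
  then show "(energy x)\<^sup>2 + (energy y)\<^sup>2 \<le> (t + 1 / t) * (energy x * energy y)"
    using sum_sq_energy_le[of x y] by linarith
qed (use assms(1) energy_ge_one[of y] in auto)

lemma energy_le_3_mult_energy:
  assumes "gbar x y < 1"
  shows "energy x \<le> 3 * energy y"
proof (rule energy_le_mult_energy)
  from assms gbar_nonneg[of x y] have "(gbar x y)\<^sup>2 \<le> 1"
    by (simp add: power_le_one)
  then show "2 + (gbar x y)\<^sup>2 \<le> 3 + 1 / 3"
    by simp
qed simp

lemma energy_le_2_mult_energy:
  assumes "gbar x y \<le> 1 / 2"
  shows "energy x \<le> 2 * energy y"
proof (rule energy_le_mult_energy)
  from assms gbar_nonneg[of x y] have "(gbar x y)\<^sup>2 \<le> (1 / 2)\<^sup>2"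
    by (intro power_mono)
  then show "2 + (gbar x y)\<^sup>2 \<le> 2 + 1 / 2"
    by (simp add: power_divide)
qed simp

lemma energy_le_sqrt5_mult_energy:
  assumes "gbar x y \<le> 1 / 2"
  shows "energy x \<le> sqrt 5 * energy y"
proof -
  have "2 * energy y \<le> sqrt 5 * energy y"
    using energy_ge_one[of y] by (intro mult_right_mono) (simp_all add: real_le_rsqrt)
  with energy_le_2_mult_energy[OF assms] show ?thesis
    by linarith
qed

theorem lemma3p5:
  shows "(\<exists>C>0. \<forall>p q p' q' :: real^3.
            conserv p q p' q' \<and> gbar p' p < 1 \<longrightarrow>
              energy q' \<le> C * energy q \<and> energy q \<le> C * energy q' \<and>
              energy p' \<le> C * energy p \<and> energy p \<le> C * energy p')
       \<and> (\<forall>p q p' q' :: real^3. \<forall>k::int.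
            conserv p q p' q' \<and> k > 0 \<and>
            2 powr (- real_of_int k - 1) \<le> gbar p' p \<and> gbar p' p \<le> 2 powr (- real_of_int k)
            \<longrightarrow> energy p \<le> sqrt 5 * energy p' \<and> energy p' \<le> sqrt 5 * energy p)"
proof (intro conjI exI[of _ 3] allI impI; (elim conjE)?)
  fix p q p' q' :: "real^3"
  assume "conserv p q p' q'" and "gbar p' p < 1"
  then have "gbar q' q < 1" and "gbar q q' < 1" and "gbar p' p < 1" and "gbar p p' < 1"
    using gbar_conserv gbar_commute by metis+
  then show "energy q' \<le> 3 * energy q" and "energy q \<le> 3 * energy q'"
    and "energy p' \<le> 3 * energy p" and "energy p \<le> 3 * energy p'"
    by (simp_all add: energy_le_3_mult_energy)
next
  fix p q p' q' :: "real^3" and k :: int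
  assume "k > 0" and "gbar p' p \<le> 2 powr (- real_of_int k)"
  moreover have "2 powr (- real_of_int k) \<le> 2 powr (- 1)"
    using \<open>k > 0\<close> by (intro powr_mono) auto
  ultimately have "gbar p' p \<le> 1 / 2" and "gbar p p' \<le> 1 / 2"
    by (simp_all add: gbar_commute powr_minus)
  then show "energy p \<le> sqrt 5 * energy p'" and "energy p' \<le> sqrt 5 * energy p"
    by (simp_all add: energy_le_sqrt5_mult_energy)
qed simp

end
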